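(* For integers $n\ge1$ and $d\ge1$, let $N(n,d)$ be the number of cycle set structures on a fixed $n$-element set whose class divides $d$. If $d=p_1^{a_1}\cdots p_r^{a_r}$ is the prime factorization of $d$, then $$N(n,d)\le\prod_{i=1}^r N(n,p_i^{a_i}).$$
   Context: A cycle set structure on a set $S$ is a binary operation $*$ such that for every $s$ the map $t\mapsto s*t$ is a bijection of $S$ and $(s*t)*(s*u)=(t*s)*(t*u)$ for all $s,t,u\in S$. Write $S=\{s_1,\dots,s_n\}$, let $\psi(s)\in\mathfrak S_n$ satisfy $s_i*s_j=s_{\psi(s_i)(j)}$, $T(s)=s*s$, and $\psi_k(s)=\psi(T^{k-1}(s))\circ\cdots\circ\psi(T(s))\circ\psi(s)$. The class of the cycle set is the least integer $d\ge1$ with $\psi_d(s)=\mathrm{id}$ for all $s\in S$. (The paper does not specify whether cycle sets are counted up to isomorphism; here they are counted as operations on a fixed labelled set.) *)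

theory Defs
  imports "HOL-Library.FuncSet" "HOL-Computational_Algebra.Primes"
begin

text \<open>A cycle set structure on the carrier S: op s t plays the role of s * t.\<close>
definition cycle_set :: "'a set \<Rightarrow> ('a \<Rightarrow> 'a \<Rightarrow> 'a) \<Rightarrow> bool" where
  "cycle_set S op \<longleftrightarrow>
     (\<forall>s\<in>S. bij_betw (op s) S S) \<and>
     (\<forall>s\<in>S. \<forall>t\<in>S. \<forall>u\<in>S. op (op s t) (op s u) = op (op t s) (op t u))"

definition cs_T :: "('a \<Rightarrow> 'a \<Rightarrow> 'a) \<Rightarrow> 'a \<Rightarrow> 'a" where
  "cs_T op s = op s s"

fun cs_psi :: "('a \<Rightarrow> 'a \<Rightarrow> 'a) \<Rightarrow> nat \<Rightarrow> 'a \<Rightarrow> 'a \<Rightarrow> 'a" where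
  "cs_psi op 0 s = id"
| "cs_psi op (Suc k) s = op ((cs_T op ^^ k) s) \<circ> cs_psi op k s"

definition cs_psi_trivial :: "'a set \<Rightarrow> ('a \<Rightarrow> 'a \<Rightarrow> 'a) \<Rightarrow> nat \<Rightarrow> bool" where
  "cs_psi_trivial S op k \<longleftrightarrow> (\<forall>s\<in>S. \<forall>t\<in>S. cs_psi op k s t = t)"

definition cs_class :: "'a set \<Rightarrow> ('a \<Rightarrow> 'a \<Rightarrow> 'a) \<Rightarrow> nat" where
  "cs_class S op = (LEAST d. d \<ge> 1 \<and> cs_psi_trivial S op d)"

definition class_divides :: "'a set \<Rightarrow> ('a \<Rightarrow> 'a \<Rightarrow> 'a) \<Rightarrow> nat \<Rightarrow> bool" where
  "class_divides S op d \<longleftrightarrow>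
     (\<exists>k\<ge>1. cs_psi_trivial S op k) \<and> cs_class S op dvd d"

text \<open>N(n,d): number of cycle set operations on the labelled set {0..<n}
  (operations are represented extensionally, as extensional functions in PiE)
  whose class divides d.\<close>
definition N_cs :: "nat \<Rightarrow> nat \<Rightarrow> nat" where
  "N_cs n d = card {op \<in> {0..<n} \<rightarrow>\<^sub>E ({0..<n} \<rightarrow>\<^sub>E {0..<n}).
                      cycle_set {0..<n} op \<and> class_divides {0..<n} op d}"

end

theory Submission
  imports Defs "HOL-Number_Theory.Cong"
begin

(* For every k, the maps psi_k(s) are the left multiplications of a new cycle set structure
   s *_k t = psi_k(s)(t) on S, and psi_m of this structure is psi_(k m) of the old one.  So if
   the class of * divides d = q_1 ... q_r (pairwise coprime) and d divides e_i q_i, the class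
   of *_(e_i) divides q_i.  The Chinese remainder theorem provides such e_i with
   e_1 + ... + e_r = 1 (mod d).  Since psi_(a+b)(s) = psi_b(T^a s) psi_a(s), the structure
   *_(a+b) is determined by *_a and *_b; hence the family ( *_(e_i) )_i determines
   *_(e_1 + ... + e_r) = *_1 = *, and * |-> ( *_(e_i) )_i is injective. *)

lemma cs_psi_self: "cs_psi op k s s = (cs_T op ^^ k) s"
  by (induction k) (simp_all add: cs_T_def[symmetric])

lemma cs_psi_add: "cs_psi op (a + b) s = cs_psi op b ((cs_T op ^^ a) s) \<circ> cs_psi op a s"
  by (induction b) (simp_all add: funpow_add ac_simps)

lemma cs_psi_add_apply:
  "cs_psi op (a + b) s t = cs_psi op b (cs_psi op a s s) (cs_psi op a s t)"
  by (simp add: cs_psi_add cs_psi_self)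

lemma cycle_set_closed: "cycle_set S op \<Longrightarrow> s \<in> S \<Longrightarrow> t \<in> S \<Longrightarrow> op s t \<in> S"
  unfolding cycle_set_def by (meson bij_betwE)

lemma cs_T_funpow_closed: "cycle_set S op \<Longrightarrow> s \<in> S \<Longrightarrow> (cs_T op ^^ k) s \<in> S"
  by (induction k) (simp_all add: cs_T_def cycle_set_closed)

lemma cs_psi_closed: "cycle_set S op \<Longrightarrow> s \<in> S \<Longrightarrow> t \<in> S \<Longrightarrow> cs_psi op k s t \<in> S"
  by (induction k) (simp_all add: cs_T_funpow_closed cycle_set_closed)

lemma bij_betw_cs_psi:
  assumes "cycle_set S op" "s \<in> S"
  shows "bij_betw (cs_psi op k s) S S"
proof (induction k)
  case 0
  show ?case by (simp only: cs_psi.simps bij_betw_id)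
next
  case (Suc k)
  have "bij_betw (op ((cs_T op ^^ k) s)) S S"
    using assms cs_T_funpow_closed[OF assms] unfolding cycle_set_def by blast
  then show ?case using bij_betw_trans[OF Suc] by (simp add: comp_def)
qed

lemma cs_psi_trivial_add:
  assumes "cs_psi_trivial S op c" "s \<in> S" "t \<in> S"
  shows "cs_psi op (c + a) s t = cs_psi op a s t"
  using assms by (simp add: cs_psi_add_apply cs_psi_trivial_def)

lemma cs_psi_trivial_mult: "cs_psi_trivial S op c \<Longrightarrow> cs_psi_trivial S op (c * m)"
  by (induction m) (simp_all add: cs_psi_trivial_def cs_psi_trivial_add)

lemma cs_psi_mod:
  assumes "cs_psi_trivial S op c" "s \<in> S" "t \<in> S"
  shows "cs_psi op (k mod c) s t = cs_psi op k s t"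
proof -
  have "k = c * (k div c) + k mod c" by simp
  then show ?thesis
    using assms cs_psi_trivial_add[OF cs_psi_trivial_mult] by metis
qed

lemma class_divides_iff_cs_psi_trivial:
  assumes "d \<ge> 1"
  shows "class_divides S op d \<longleftrightarrow> cs_psi_trivial S op d"
proof
  assume "class_divides S op d"
  then obtain k where "k \<ge> 1" "cs_psi_trivial S op k" and "cs_class S op dvd d"
    unfolding class_divides_def by blast
  then have "cs_psi_trivial S op (cs_class S op)"
    unfolding cs_class_def by (metis (mono_tags, lifting) LeastI)
  with \<open>cs_class S op dvd d\<close> show "cs_psi_trivial S op d"
    by (metis cs_psi_trivial_mult dvdE)
next
  assume trivial: "cs_psi_trivial S op d"
  define c where "c = cs_class S op"
  have "c \<ge> 1" and trivial_c: "cs_psi_trivial S op c"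
    unfolding c_def cs_class_def using trivial assms by (metis (mono_tags, lifting) LeastI)+
  have "cs_psi_trivial S op (d mod c)"
    using trivial cs_psi_mod[OF trivial_c] unfolding cs_psi_trivial_def by simp
  then have "d mod c = 0"
    using \<open>c \<ge> 1\<close> not_less_Least[of "d mod c" "\<lambda>d. d \<ge> 1 \<and> cs_psi_trivial S op d"]
    unfolding c_def cs_class_def by auto
  then have "cs_class S op dvd d"
    unfolding c_def by (simp add: dvd_eq_mod_eq_0)
  then show "class_divides S op d"
    unfolding class_divides_def using trivial assms by auto
qed

(* Read from id, the word s^k gives psi_k(s), and the cycle set
   law says exactly that two adjacent letters may be swapped. *)
fun cs_word :: "('a \<Rightarrow> 'a \<Rightarrow> 'a) \<Rightarrow> ('a \<Rightarrow> 'a) \<Rightarrow> 'a list \<Rightarrow> 'a \<Rightarrow> 'a" where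
  "cs_word op R [] = R"
| "cs_word op R (y # ys) = cs_word op (op (R y) \<circ> R) ys"

lemma cs_word_append: "cs_word op R (xs @ ys) = cs_word op (cs_word op R xs) ys"
  by (induction xs arbitrary: R) simp_all

lemma cs_word_replicate: "cs_word op R (replicate m t) = cs_psi op m (R t) \<circ> R"
proof (induction m)
  case (Suc m)
  have "cs_word op R (replicate (Suc m) t) = cs_word op R (replicate m t @ [t])"
    by (simp add: replicate_append_same)
  also have "\<dots> = op (cs_psi op m (R t) (R t)) \<circ> cs_psi op m (R t) \<circ> R"
    using Suc by (simp add: cs_word_append comp_def)
  finally show ?case by (simp add: cs_psi_self comp_assoc)
qed simp

lemma cs_word_cong:
  assumes "cycle_set S op" "set ys \<subseteq> S" "\<forall>t\<in>S. R t = R' t" "\<forall>t\<in>S. R t \<in> S"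
  shows "\<forall>t\<in>S. cs_word op R ys t = cs_word op R' ys t"
  using assms(2-)
proof (induction ys arbitrary: R R')
  case (Cons y ys)
  then show ?case
    using cycle_set_closed[OF assms(1)] by (simp add: Cons.IH)
qed simp

lemma cs_word_swap:
  assumes "cycle_set S op" "a \<in> S" "b \<in> S" "set ys \<subseteq> S" "\<forall>t\<in>S. R t \<in> S"
  shows "\<forall>t\<in>S. cs_word op R (a # b # ys) t = cs_word op R (b # a # ys) t"
proof -
  have "\<forall>t\<in>S. op (op (R a) (R b)) (op (R a) (R t)) = op (op (R b) (R a)) (op (R b) (R t))"
    using assms unfolding cycle_set_def by simp
  then show ?thesis
    using assms cs_word_cong[OF assms(1,4)] cycle_set_closed[OF assms(1)] by (simp add: comp_def)
qed

lemma cs_word_Cons_eq_snoc: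
  assumes "cycle_set S op" "y \<in> S" "set xs \<subseteq> S" "\<forall>t\<in>S. R t \<in> S"
  shows "\<forall>t\<in>S. cs_word op R (y # xs) t = cs_word op R (xs @ [y]) t"
  using assms(3,4)
proof (induction xs arbitrary: R)
  case (Cons x xs)
  have closed: "\<forall>t\<in>S. (op (R x) \<circ> R) t \<in> S"
    using Cons.prems cycle_set_closed[OF assms(1)] by simp
  have "\<forall>t\<in>S. cs_word op (op (R x) \<circ> R) (y # xs) t
      = cs_word op (op (R x) \<circ> R) (xs @ [y]) t"
    using Cons.IH[OF _ closed] Cons.prems by (simp add: comp_def)
  then have "\<forall>t\<in>S. cs_word op R (x # y # xs) t = cs_word op R (x # xs @ [y]) t"
    by (simp add: comp_def)
  then show ?case
    using cs_word_swap[OF assms(1,2)] Cons.prems by simp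
qed simp

lemma cs_word_rotate:
  assumes "cycle_set S op" "set xs \<subseteq> S" "\<forall>t\<in>S. R t \<in> S"
  shows "\<forall>t\<in>S. cs_word op R (rotate k xs) t = cs_word op R xs t"
proof (induction k)
  case (Suc k)
  have "\<forall>t\<in>S. cs_word op R (rotate1 (rotate k xs)) t = cs_word op R (rotate k xs) t"
  proof (cases "rotate k xs")
    case (Cons y ys)
    moreover have "set (rotate k xs) \<subseteq> S"
      using assms(2) by simp
    ultimately show ?thesis
      using cs_word_Cons_eq_snoc[OF assms(1) _ _ assms(3), of y ys] by simp
  qed simp
  with Suc show ?case by (simp add: rotate_Suc)
qed simp

lemma cs_psi_cycle_law:
  assumes "cycle_set S op" "s \<in> S" "t \<in> S" "u \<in> S"
  shows "cs_psi op k (cs_psi op k s t) (cs_psi op k s u)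
       = cs_psi op k (cs_psi op k t s) (cs_psi op k t u)"
proof -
  have "set (replicate k s @ replicate k t) \<subseteq> S"
    using assms by auto
  then have "cs_word op id (rotate k (replicate k s @ replicate k t)) u
      = cs_word op id (replicate k s @ replicate k t) u"
    using cs_word_rotate[OF assms(1), of _ id] assms(4) by simp
  moreover have "rotate k (replicate k s @ replicate k t) = replicate k t @ replicate k s"
    using rotate_append[of "replicate k s"] by simp
  ultimately show ?thesis
    by (simp add: cs_word_append cs_word_replicate)
qed

(* The structure s *_k t = psi_k(s)(t), restricted to S so that it is an extensional operation
   of the kind counted by N_cs. *)
definition cs_power :: "'a set \<Rightarrow> ('a \<Rightarrow> 'a \<Rightarrow> 'a) \<Rightarrow> nat \<Rightarrow> ('a \<Rightarrow> 'a \<Rightarrow> 'a)" where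
  "cs_power S op k = (\<lambda>s\<in>S. \<lambda>t\<in>S. cs_psi op k s t)"

lemma cs_power_PiE: "cycle_set S op \<Longrightarrow> cs_power S op k \<in> S \<rightarrow>\<^sub>E (S \<rightarrow>\<^sub>E S)"
  by (simp add: cs_power_def cs_psi_closed)

lemma cycle_set_cs_power:
  assumes "cycle_set S op"
  shows "cycle_set S (cs_power S op k)"
proof -
  have "bij_betw (cs_power S op k s) S S" if "s \<in> S" for s
    using bij_betw_cs_psi[OF assms that]
    by (rule bij_betw_cong[THEN iffD1, rotated]) (simp add: cs_power_def that)
  then show ?thesis
    unfolding cycle_set_def
    using cs_psi_cycle_law[OF assms] cs_psi_closed[OF assms] by (simp add: cs_power_def)
qed

lemma cs_T_cs_power_funpow:
  assumes "cycle_set S op" "s \<in> S"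
  shows "(cs_T (cs_power S op k) ^^ m) s = (cs_T op ^^ (k * m)) s"
proof (induction m)
  case (Suc m)
  have "(cs_T (cs_power S op k) ^^ Suc m) s = cs_T (cs_power S op k) ((cs_T op ^^ (k * m)) s)"
    using Suc by simp
  also have "\<dots> = (cs_T op ^^ k) ((cs_T op ^^ (k * m)) s)"
    using cs_T_funpow_closed[OF assms] by (simp add: cs_T_def cs_power_def cs_psi_self)
  also have "\<dots> = (cs_T op ^^ (k * Suc m)) s"
    by (simp only: funpow_add comp_apply mult_Suc_right)
  finally show ?case .
qed simp

lemma cs_psi_cs_power:
  assumes "cycle_set S op" "s \<in> S" "t \<in> S"
  shows "cs_psi (cs_power S op k) m s t = cs_psi op (k * m) s t"
proof (induction m)
  case (Suc m)
  have "cs_psi (cs_power S op k) (Suc m) s t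
      = cs_power S op k ((cs_T op ^^ (k * m)) s) (cs_psi op (k * m) s t)"
    using Suc cs_T_cs_power_funpow[OF assms(1,2)] by simp
  also have "\<dots> = cs_psi op k ((cs_T op ^^ (k * m)) s) (cs_psi op (k * m) s t)"
    using assms cs_T_funpow_closed[OF assms(1,2)] cs_psi_closed[OF assms(1)] by (simp add: cs_power_def)
  also have "\<dots> = cs_psi op (k * Suc m) s t"
    by (metis cs_psi_add comp_apply mult_Suc_right add.commute)
  finally show ?case .
qed simp

lemma cs_power_one:
  assumes "op \<in> S \<rightarrow>\<^sub>E (S \<rightarrow>\<^sub>E S)"
  shows "cs_power S op 1 = op"
proof -
  have "(\<lambda>t\<in>S. op s t) = op s" if "s \<in> S" for s
    using assms that by (simp add: PiE_iff extensional_restrict)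
  then have "cs_power S op 1 = restrict op S"
    unfolding cs_power_def by (intro restrict_ext) simp
  also have "\<dots> = op"
    using assms by (simp add: PiE_iff extensional_restrict)
  finally show ?thesis .
qed

lemma cs_power_mod: "cs_psi_trivial S op c \<Longrightarrow> cs_power S op (k mod c) = cs_power S op k"
  unfolding cs_power_def by (intro restrict_ext) (simp add: cs_psi_mod)

lemma cs_power_eqI:
  assumes "\<And>s t. s \<in> S \<Longrightarrow> t \<in> S \<Longrightarrow> cs_power S op1 k s t = cs_power S op2 k s t"
  shows "cs_power S op1 k = cs_power S op2 k"
  using assms unfolding cs_power_def by (intro restrict_ext) simp

lemma cs_power_add:
  assumes "cycle_set S op" "s \<in> S" "t \<in> S"
  shows "cs_power S op (a + b) s t
       = cs_power S op b (cs_power S op a s s) (cs_power S op a s t)"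
  using assms cs_psi_closed[OF assms(1)] by (simp add: cs_power_def cs_psi_add_apply)

lemma cs_power_sum_eqI:
  assumes "cycle_set S op1" "cycle_set S op2" "finite I"
    and "\<forall>i\<in>I. cs_power S op1 (e i) = cs_power S op2 (e i)"
  shows "cs_power S op1 (\<Sum>i\<in>I. e i) = cs_power S op2 (\<Sum>i\<in>I. e i)"
  using assms(3,4)
proof (induction I rule: finite_induct)
  case (insert i I)
  have "cs_power S op1 (e i + sum e I) s t = cs_power S op2 (e i + sum e I) s t"
    if "s \<in> S" "t \<in> S" for s t
  proof -
    have "cs_power S op1 (e i + sum e I) s t
        = cs_power S op1 (sum e I) (cs_power S op1 (e i) s s) (cs_power S op1 (e i) s t)"
      by (rule cs_power_add[OF assms(1) that])
    also have "\<dots> = cs_power S op2 (sum e I) (cs_power S op2 (e i) s s) (cs_power S op2 (e i) s t)"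
      using insert by simp
    also have "\<dots> = cs_power S op2 (e i + sum e I) s t"
      by (rule cs_power_add[OF assms(2) that, symmetric])
    finally show ?thesis .
  qed
  with insert.hyps show ?case
    by (intro cs_power_eqI) simp
qed (simp add: cs_power_def)

lemma chinese_remainder_idempotents_nat:
  fixes q :: "'i \<Rightarrow> nat"
  assumes "finite I" and coprime: "\<forall>i\<in>I. \<forall>j\<in>I. i \<noteq> j \<longrightarrow> coprime (q i) (q j)"
  obtains e where "\<forall>i\<in>I. (\<Prod>j\<in>I. q j) dvd e i * q i"
    and "[(\<Sum>i\<in>I. e i) = 1] (mod (\<Prod>j\<in>I. q j))"
proof -
  have "\<exists>x. \<forall>j\<in>I. [x = (if j = i then 1 else 0)] (mod q j)" for i
    using chinese_remainder_nat[OF assms, of "\<lambda>j. if j = i then 1 else 0"] by simp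
  then obtain e where e: "\<And>i j. j \<in> I \<Longrightarrow> [e i = (if j = i then 1 else 0)] (mod q j)"
    by metis
  have "(\<Prod>j\<in>I. q j) dvd e i * q i" for i
  proof -
    have "[e i * q i = 0] (mod q j)" if "j \<in> I" for j
      using e[OF that, of i] cong_scalar_right[of "e i" 0 "q j" "q i"]
      by (cases "j = i") (simp_all add: cong_0_iff)
    then have "[e i * q i = 0] (mod (\<Prod>j\<in>I. q j))"
      using coprime by (intro coprime_cong_prod_nat) auto
    then show ?thesis
      by (simp add: cong_0_iff)
  qed
  moreover have "[(\<Sum>i\<in>I. e i) = 1] (mod q j)" if "j \<in> I" for j
  proof -
    have "[(\<Sum>i\<in>I. e i) = (\<Sum>i\<in>I. if j = i then 1 else 0)] (mod q j)"
      using e[OF that] by (intro cong_sum) simp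
    then show ?thesis
      using assms(1) that by simp
  qed
  then have "[(\<Sum>i\<in>I. e i) = 1] (mod (\<Prod>j\<in>I. q j))"
    using coprime by (intro coprime_cong_prod_nat) auto
  ultimately show ?thesis
    using that by blast
qed

definition cycle_sets_class_dvd :: "'a set \<Rightarrow> nat \<Rightarrow> ('a \<Rightarrow> 'a \<Rightarrow> 'a) set" where
  "cycle_sets_class_dvd S d =
     {op \<in> S \<rightarrow>\<^sub>E (S \<rightarrow>\<^sub>E S). cycle_set S op \<and> class_divides S op d}"

lemma cs_power_in_cycle_sets_class_dvd:
  assumes "op \<in> cycle_sets_class_dvd S d" "d \<ge> 1" "q \<ge> 1" "d dvd e * q"
  shows "cs_power S op e \<in> cycle_sets_class_dvd S q"
proof -
  have op: "cycle_set S op" "cs_psi_trivial S op d"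
    using assms(1,2) class_divides_iff_cs_psi_trivial
    unfolding cycle_sets_class_dvd_def by auto
  obtain m where "e * q = d * m"
    using assms(4) by blast
  then have "cs_psi_trivial S (cs_power S op e) q"
    using cs_psi_trivial_mult[OF op(2), of m] cs_psi_cs_power[OF op(1)]
    unfolding cs_psi_trivial_def by simp
  then show ?thesis
    unfolding cycle_sets_class_dvd_def
    using class_divides_iff_cs_psi_trivial[OF assms(3)] cs_power_PiE[OF op(1)]
      cycle_set_cs_power[OF op(1)]
    by blast
qed

lemma cycle_sets_class_dvd_eqI:
  assumes "op1 \<in> cycle_sets_class_dvd S d" "op2 \<in> cycle_sets_class_dvd S d" "d \<ge> 1"
    and "finite I" "[(\<Sum>i\<in>I. e i) = 1] (mod d)"
    and "\<forall>i\<in>I. cs_power S op1 (e i) = cs_power S op2 (e i)"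
  shows "op1 = op2"
proof -
  have "cs_power S op (\<Sum>i\<in>I. e i) = op" if "op \<in> cycle_sets_class_dvd S d" for op
  proof -
    have "cs_psi_trivial S op d" and op: "op \<in> S \<rightarrow>\<^sub>E (S \<rightarrow>\<^sub>E S)"
      using that assms(3) class_divides_iff_cs_psi_trivial
      unfolding cycle_sets_class_dvd_def by auto
    then have "cs_power S op (\<Sum>i\<in>I. e i) = cs_power S op 1"
      using assms(5) unfolding cong_def by (metis cs_power_mod)
    then show ?thesis
      using cs_power_one[OF op] by simp
  qed
  moreover have "cs_power S op1 (\<Sum>i\<in>I. e i) = cs_power S op2 (\<Sum>i\<in>I. e i)"
    using assms cs_power_sum_eqI unfolding cycle_sets_class_dvd_def by blast
  ultimately show ?thesis
    using assms(1,2) by metis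
qed

lemma card_cycle_sets_class_dvd_prod_le:
  fixes q :: "'i \<Rightarrow> nat"
  assumes "finite S" "finite I" "\<forall>i\<in>I. \<forall>j\<in>I. i \<noteq> j \<longrightarrow> coprime (q i) (q j)"
    and "\<forall>i\<in>I. q i \<ge> 1"
  shows "card (cycle_sets_class_dvd S (\<Prod>i\<in>I. q i))
       \<le> (\<Prod>i\<in>I. card (cycle_sets_class_dvd S (q i)))"
proof -
  define d where "d = (\<Prod>i\<in>I. q i)"
  have "d \<ge> 1"
    using assms(4) unfolding d_def by (simp add: Suc_le_eq prod_pos)
  obtain e where e_dvd: "\<forall>i\<in>I. d dvd e i * q i" and e_sum: "[(\<Sum>i\<in>I. e i) = 1] (mod d)"
    using chinese_remainder_idempotents_nat[OF assms(2,3)] unfolding d_def by blast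
  define F where "F op = (\<lambda>i\<in>I. cs_power S op (e i))" for op
  have "F ` cycle_sets_class_dvd S d \<subseteq> (\<Pi>\<^sub>E i\<in>I. cycle_sets_class_dvd S (q i))"
    using \<open>d \<ge> 1\<close> assms(4) e_dvd unfolding F_def
    by (auto intro!: cs_power_in_cycle_sets_class_dvd)
  moreover have "inj_on F (cycle_sets_class_dvd S d)"
    using cycle_sets_class_dvd_eqI[OF _ _ \<open>d \<ge> 1\<close> assms(2) e_sum]
    unfolding F_def inj_on_def by (metis restrict_apply')
  moreover have "finite (cycle_sets_class_dvd S (q i))" for i
    using assms(1) unfolding cycle_sets_class_dvd_def by (simp add: finite_PiE)
  ultimately have "card (cycle_sets_class_dvd S d) \<le> card (\<Pi>\<^sub>E i\<in>I. cycle_sets_class_dvd S (q i))"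
    using assms(2) by (intro card_inj_on_le) (simp_all add: finite_PiE)
  then show ?thesis
    using assms(2) unfolding d_def by (simp add: card_PiE)
qed

theorem mainTheorem14:
  fixes n d :: nat
  assumes "n \<ge> 1" and "d \<ge> 1"
  shows "N_cs n d \<le> (\<Prod>p\<in>prime_factors d. N_cs n (p ^ multiplicity p d))"
proof -
  have N_cs_eq: "N_cs n k = card (cycle_sets_class_dvd {0..<n} k)" for k
    unfolding N_cs_def cycle_sets_class_dvd_def ..
  have "card (cycle_sets_class_dvd {0..<n} (\<Prod>p\<in>prime_factors d. p ^ multiplicity p d))
      \<le> (\<Prod>p\<in>prime_factors d. card (cycle_sets_class_dvd {0..<n} (p ^ multiplicity p d)))"
  proof (rule card_cycle_sets_class_dvd_prod_le)
    show "\<forall>p\<in>prime_factors d. \<forall>p'\<in>prime_factors d. p \<noteq> p' \<longrightarrow>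
        coprime (p ^ multiplicity p d) (p' ^ multiplicity p' d)"
      by (auto intro: primes_coprime dest: in_prime_factors_imp_prime)
    show "\<forall>p\<in>prime_factors d. p ^ multiplicity p d \<ge> 1"
      by (auto simp: Suc_le_eq dest: in_prime_factors_imp_prime prime_gt_0_nat)
  qed simp_all
  moreover have "(\<Prod>p\<in>prime_factors d. p ^ multiplicity p d) = d"
    using assms(2) by (simp add: prod_prime_factors)
  ultimately show ?thesis
    by (simp only: N_cs_eq)
qed

end
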